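(* Let $\mathcal{T}\in\mathbb{K}^{R\times R\times K}$ be slice mix invertible. Then for every nonzero $\boldsymbol{\lambda}\in\mathbb{K}^K$, $\mathrm{am}(\mathrm{span}(\boldsymbol{\lambda}))\geq\mathrm{gm}(\mathrm{span}(\boldsymbol{\lambda}))$. In particular, if $(\mathrm{span}(\boldsymbol{\lambda}),\mathbf{x})$ is a JGE pair of $\mathcal{T}$, then there is an integer $m>0$ with $p_{\mathcal{T}}(\boldsymbol{\gamma})=(\lambda_1\gamma_1+\cdots+\lambda_K\gamma_K)^m g(\boldsymbol{\gamma})$ for some nonzero polynomial $g$. Furthermore, if $\mathcal{T}$ has border $\mathbb{K}$-rank $R$, then $p_{\mathcal{T}}$ factors as a product of $R$ linear forms in $\boldsymbol{\gamma}$, so $\mathcal{T}$ has $R$ JGE values counting algebraic multiplicity.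
   Context: $\mathbb{K}$ denotes $\mathbb{R}$ or $\mathbb{C}$. For $\mathcal{T}\in\mathbb{K}^{R\times R\times K}$ with slices $\mathbf{T}_k=\mathcal{T}(:,:,k)$: slice mix invertible means some linear combination of the $\mathbf{T}_k$ is invertible. A nonzero $\mathbf{x}$ is a JGE vector if there are $\boldsymbol{\lambda}\in\mathbb{K}^K$ and nonzero $\mathbf{y}$ with $\mathbf{T}_\ell\mathbf{x}=\lambda_\ell\mathbf{y}$ for all $\ell$; $\mathrm{span}(\boldsymbol{\lambda})$ is a JGE value, $(\mathrm{span}(\boldsymbol{\lambda}),\mathbf{x})$ a JGE pair. $p_{\mathcal{T}}(\boldsymbol{\gamma})=\det(\sum_{k=1}^K\gamma_k\mathbf{T}_k)$. $\mathrm{am}(\mathrm{span}(\boldsymbol{\lambda}))$ is the largest $m$ such that $(\sum_k\lambda_k\gamma_k)^m$ divides $p_{\mathcal{T}}$; $\mathrm{gm}(\mathrm{span}(\boldsymbol{\lambda}))$ is the dimension of the span of all $\mathbf{x}$ with $(\mathrm{span}(\boldsymbol{\lambda}),\mathbf{x})$ a JGE pair. The border $\mathbb{K}$-rank of a tensor is the least $R$ such that it is a limit of tensors of $\mathbb{K}$-rank at most $R$ ($\mathbb{K}$-rank: least number of rank one tensors with $\mathbb{K}$-factors summing to it). *)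

theory Defs
  imports "HOL-Analysis.Analysis"
begin

text \<open>Tensors in K^(R x R x K) are represented as T :: 'a^'k^'r^'r with entry
  T(i,j,k) = T $ i $ j $ k; R = CARD('r), K = CARD('k).\<close>

definition slice :: "'a^'k^'r^'r \<Rightarrow> 'k \<Rightarrow> 'a^'r^'r" where
  "slice T k = (\<chi> i j. T $ i $ j $ k)"

definition slice_mix :: "'a::comm_ring_1^'k^'r^'r \<Rightarrow> 'a^'k \<Rightarrow> 'a^'r^'r" where
  "slice_mix T \<gamma> = (\<chi> i j. \<Sum>k\<in>UNIV. \<gamma> $ k * slice T k $ i $ j)"

text \<open>Polynomial functions K^K -> K (K infinite, so these are the polynomials).\<close>
inductive kpoly :: "('a::comm_ring_1^'k \<Rightarrow> 'a) \<Rightarrow> bool" where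
  kpoly_const: "kpoly (\<lambda>\<gamma>. c)"
| kpoly_var: "kpoly (\<lambda>\<gamma>. \<gamma> $ k)"
| kpoly_add: "kpoly f \<Longrightarrow> kpoly g \<Longrightarrow> kpoly (\<lambda>\<gamma>. f \<gamma> + g \<gamma>)"
| kpoly_mult: "kpoly f \<Longrightarrow> kpoly g \<Longrightarrow> kpoly (\<lambda>\<gamma>. f \<gamma> * g \<gamma>)"

definition slice_mix_invertible :: "'a::field^'k^'r^'r \<Rightarrow> bool" where
  "slice_mix_invertible T \<longleftrightarrow> (\<exists>\<gamma>. invertible (slice_mix T \<gamma>))"

definition pT :: "'a::field^'k^'r^'r \<Rightarrow> 'a^'k \<Rightarrow> 'a" where
  "pT T \<gamma> = det (slice_mix T \<gamma>)"

definition linform :: "'a::comm_ring_1^'k \<Rightarrow> 'a^'k \<Rightarrow> 'a" where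
  "linform lam \<gamma> = (\<Sum>k\<in>UNIV. lam $ k * \<gamma> $ k)"

definition jge_pair :: "'a::field^'k^'r^'r \<Rightarrow> 'a^'k \<Rightarrow> 'a^'r \<Rightarrow> bool" where
  "jge_pair T lam x \<longleftrightarrow> x \<noteq> 0 \<and> (\<exists>y. y \<noteq> 0 \<and> (\<forall>l. slice T l *v x = lam $ l *s y))"

definition jge_value :: "'a::field^'k^'r^'r \<Rightarrow> 'a^'k \<Rightarrow> bool" where
  "jge_value T lam \<longleftrightarrow> (\<exists>x. jge_pair T lam x)"

definition lin_pow_dvd :: "'a::field^'k \<Rightarrow> nat \<Rightarrow> ('a^'k \<Rightarrow> 'a) \<Rightarrow> bool" where
  "lin_pow_dvd lam m p \<longleftrightarrow> (\<exists>g. kpoly g \<and> (\<forall>\<gamma>. p \<gamma> = linform lam \<gamma> ^ m * g \<gamma>))"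

definition am :: "'a::field^'k^'r^'r \<Rightarrow> 'a^'k \<Rightarrow> nat" where
  "am T lam = (GREATEST m. lin_pow_dvd lam m (pT T))"

definition gm :: "'a::field^'k^'r^'r \<Rightarrow> 'a^'k \<Rightarrow> nat" where
  "gm T lam = vec.dim {x. jge_pair T lam x}"

definition rank1 :: "'a::comm_ring_1^'r \<Rightarrow> 'a^'r \<Rightarrow> 'a^'k \<Rightarrow> 'a^'k^'r^'r" where
  "rank1 a b c = (\<chi> i j k. a $ i * b $ j * c $ k)"

definition tensor_rank :: "'a::comm_ring_1^'k^'r^'r \<Rightarrow> nat" where
  "tensor_rank T = (LEAST n. \<exists>a b c. T = (\<Sum>s<n. rank1 (a s) (b s) (c s)))"

definition border_rank :: "'a::real_normed_field^'k^'r^'r \<Rightarrow> nat" where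
  "border_rank T = (LEAST n. \<exists>S :: nat \<Rightarrow> 'a^'k^'r^'r.
      (\<forall>t. tensor_rank (S t) \<le> n) \<and> S \<longlonglongrightarrow> T)"

end

theory Submission
  imports Defs "HOL-Computational_Algebra.Fundamental_Theorem_Algebra"
begin

(* Extend independent JGE vectors x_1, ..., x_g for span(lam) to a basis, the columns of P.
   Since (sum_k gamma_k T_k) x_i = linform lam gamma * y_i, the first g columns of
   (sum_k gamma_k T_k) P are divisible by linform lam gamma, so (linform lam gamma)^g divides
   p_T. Restricted to a line through a point where the slice mix is invertible, p_T is a
   nonzero polynomial of degree at most R, which bounds the exponent; hence am >= gm.

   A tensor S = sum_sigma a_sigma (x) b_sigma (x) c_sigma of rank at most R whose slice mix
   at gamma0 is invertible has p_S = p_S(gamma0) * prod_sigma linform (c_sigma / <c_sigma, gamma0>),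
   and for every sigma a unit vector w with S_l w = (c_sigma,l / <c_sigma, gamma0>) M w, where M is
   the slice mix at gamma0. Along a sequence of such tensors converging to T the unit vectors
   have a convergent subsequence; the coefficients then converge as quotients of convergent
   entries, and both identities pass to the limit.

   That subsequence needs K to be locally compact. By the Mazur-Ostrowski argument every x
   of a real normed field is a root of a real quadratic (X - a)^2 + d with d >= 0: at a
   minimiser of norm (x^2 - 2 a x + c) over a^2 <= c with largest c, the identity
   q^n + e^n = (q + e) h (n odd) and a lower bound for h at x allow c to grow, unless the
   minimum is 0. So the field is R or C, and its elements have bounded real coordinates. *)

section \<open>Real normed fields are locally compact\<close>

definition eval_real_poly :: "real poly \<Rightarrow> 'a::real_normed_field \<Rightarrow> 'a" where
  "eval_real_poly p x = poly (map_poly of_real p) x"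

lemma eval_real_poly_add [simp]: "eval_real_poly (p + q) x = eval_real_poly p x + eval_real_poly q x"
proof -
  have "map_poly of_real (p + q) = map_poly of_real p + (map_poly of_real q :: 'a poly)"
    by (intro poly_eqI) (simp add: coeff_map_poly)
  then show ?thesis by (simp add: eval_real_poly_def)
qed

lemma eval_real_poly_mult [simp]: "eval_real_poly (p * q) x = eval_real_poly p x * eval_real_poly q x"
proof -
  have "map_poly of_real (p * q) = map_poly of_real p * (map_poly of_real q :: 'a poly)"
    by (intro poly_eqI) (simp add: coeff_map_poly coeff_mult)
  then show ?thesis by (simp add: eval_real_poly_def)
qed

lemma eval_real_poly_pCons [simp]: "eval_real_poly (pCons a p) x = of_real a + x * eval_real_poly p x"
  by (simp add: eval_real_poly_def map_poly_pCons)

lemma eval_real_poly_0 [simp]: "eval_real_poly 0 x = 0"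
  and eval_real_poly_1 [simp]: "eval_real_poly 1 x = 1"
  by (simp_all add: eval_real_poly_def)

lemma eval_real_poly_power [simp]: "eval_real_poly (p ^ n) x = eval_real_poly p x ^ n"
  by (induction n) simp_all

lemma eval_real_poly_of_real [simp]: "eval_real_poly p (of_real t) = of_real (poly p t)"
  by (induction p) simp_all

text \<open>\<open>monic_quadratic a c\<close> is \<open>(X - a)\<^sup>2 + (c - a\<^sup>2)\<close>; the side condition \<open>a\<^sup>2 \<le> c\<close> used
  throughout says that it has no simple real root.\<close>

definition monic_quadratic :: "real \<Rightarrow> real \<Rightarrow> real poly" where
  "monic_quadratic a c = [:c, -2*a, 1:]"

lemma degree_monic_quadratic [simp]: "degree (monic_quadratic a c) = 2"
  and coeff_monic_quadratic_2 [simp]: "coeff (monic_quadratic a c) 2 = 1"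
  by (auto simp: monic_quadratic_def numeral_2_eq_2)

lemma monic_quadratic_nonzero [simp]: "monic_quadratic a c \<noteq> 0"
  by (metis degree_0 degree_monic_quadratic zero_neq_numeral)

lemma eval_monic_quadratic:
  "eval_real_poly (monic_quadratic a c) x = x*x - of_real (2*a) * x + of_real c"
  by (simp add: monic_quadratic_def algebra_simps)

lemma poly_monic_quadratic_nonneg:
  assumes "a^2 \<le> c" shows "0 \<le> poly (monic_quadratic a c) t"
proof -
  have "poly (monic_quadratic a c) t = (t - a)^2 + (c - a^2)"
    by (simp add: monic_quadratic_def algebra_simps power2_eq_square)
  then show ?thesis using assms by simp
qed

lemma real_poly_monic_quadratic_factor:
  fixes p :: "real poly"
  assumes deg: "degree p > 0" and no_root: "\<And>t. poly p t \<noteq> 0"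
  obtains a c s where "a^2 \<le> c" "p = monic_quadratic a c * s"
proof -
  have "\<not> constant (poly (map_poly complex_of_real p))"
    using deg by (simp add: constant_degree degree_map_poly)
  then obtain w :: complex where w: "eval_real_poly p w = 0"
    using fundamental_theorem_of_algebra unfolding eval_real_poly_def by blast
  have "Im w \<noteq> 0"
  proof
    assume "Im w = 0"
    then have "w = of_real (Re w)" by (simp add: complex_eq_iff)
    then show False using w no_root[of "Re w"] by (metis eval_real_poly_of_real of_real_eq_0_iff)
  qed
  define q where "q = monic_quadratic (Re w) ((cmod w)^2)"
  have "(Re w)^2 \<le> (cmod w)^2"
    using abs_Re_le_cmod[of w] by (metis abs_ge_zero power2_abs power_mono)
  moreover have q_root: "eval_real_poly q w = 0"
    unfolding q_def eval_monic_quadratic cmod_power2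
    by (simp add: complex_eq_iff power2_eq_square algebra_simps)
  moreover have "q dvd p"
  proof -
    define r where "r = p mod q"
    have "degree r \<le> 1"
      using degree_mod_less[of q p] unfolding r_def q_def by auto
    then have r: "r = [:coeff r 0, coeff r 1:]"
      by (intro poly_eqI) (auto simp: coeff_pCons coeff_eq_0 split: nat.splits)
    have "eval_real_poly p w = eval_real_poly (p div q) w * eval_real_poly q w + eval_real_poly r w"
      unfolding r_def by (metis div_mult_mod_eq eval_real_poly_add eval_real_poly_mult)
    then have "eval_real_poly r w = 0"
      using w q_root by simp
    then have "of_real (coeff r 0) + w * of_real (coeff r 1) = 0"
      by (subst (asm) r) simp
    then have "coeff r 0 = 0" "coeff r 1 = 0"
      using \<open>Im w \<noteq> 0\<close> by (auto simp: complex_eq_iff)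
    then show ?thesis using r unfolding r_def by (simp add: mod_eq_0_iff_dvd)
  qed
  ultimately show ?thesis
    using that[of "Re w" "(cmod w)^2" "p div q"] unfolding q_def by simp
qed

lemma norm_eval_real_poly_without_real_roots:
  fixes x :: "'a::real_normed_field"
  assumes m: "0 \<le> m" "\<And>a c. a^2 \<le> c \<Longrightarrow> m \<le> norm (eval_real_poly (monic_quadratic a c) x)"
    and no_root: "\<And>t. poly p t \<noteq> 0"
  shows "\<bar>lead_coeff p\<bar> * m ^ (degree p div 2) \<le> norm (eval_real_poly p x)"
  using no_root
proof (induction "degree p" arbitrary: p rule: less_induct)
  case less
  show ?case
  proof (cases "degree p = 0")
    case True
    then obtain c where "p = [:c:]" by (meson degree_eq_zeroE)
    then show ?thesis by simp
  next
    case False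
    then obtain a c s where ac: "a^2 \<le> c" and p: "p = monic_quadratic a c * s"
      using real_poly_monic_quadratic_factor less.prems by blast
    have "s \<noteq> 0" using p less.prems by auto
    then have deg: "degree p = degree s + 2"
      using p by (simp add: degree_mult_eq)
    have lc: "lead_coeff p = lead_coeff s"
      unfolding p lead_coeff_mult by simp
    have "\<bar>lead_coeff s\<bar> * m ^ (degree s div 2) \<le> norm (eval_real_poly s x)"
      using less.hyps[of s] less.prems deg p by simp
    then have "m * (\<bar>lead_coeff s\<bar> * m ^ (degree s div 2))
        \<le> norm (eval_real_poly (monic_quadratic a c) x) * norm (eval_real_poly s x)"
      using m ac by (intro mult_mono) auto
    then show ?thesis using deg lc p by (simp add: norm_mult algebra_simps)
  qed
qed

lemma monic_quadratic_shift_cofactor: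
  assumes ac: "a^2 \<le> c" and e: "0 < e"
  obtains h where "monic_quadratic a c ^ (2*k+1) + [:e ^ (2*k+1):] = monic_quadratic a (c + e) * h"
    and "\<And>t. poly h t \<noteq> 0" and "degree h = 4*k" and "lead_coeff h = 1"
proof -
  define n where "n = 2*k + 1"
  define q where "q = monic_quadratic a c"
  define E where "E = [:e:]"
  define P where "P = q^n + E^n"
  define h where "h = (\<Sum>i<n. (-E) ^ (n - Suc i) * q ^ i)"
  have E_pow: "E^n = [:e^n:]"
    unfolding E_def by (simp add: poly_const_pow)
  have "q + E = monic_quadratic a (c + e)"
    unfolding q_def E_def monic_quadratic_def by simp
  moreover have "odd n" unfolding n_def by simp
  ultimately have P_factor: "P = monic_quadratic a (c + e) * h"
    using power_diff_sumr2[of q n "-E"] unfolding P_def h_def by simp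
  have "0 < poly P t" for t
    using poly_monic_quadratic_nonneg[OF ac, of t] e unfolding P_def q_def E_def
    by (simp add: add_nonneg_pos)
  then have h_no_root: "poly h t \<noteq> 0" for t
    unfolding P_factor by (metis less_irrefl mult_zero_right poly_mult)
  then have "h \<noteq> 0" by auto
  have deg_qn: "degree (q^n) = 2*n"
    unfolding q_def by (simp add: degree_power_eq)
  moreover have deg_En: "degree (E^n) < 2*n"
    unfolding E_pow by (simp add: n_def)
  ultimately have deg_P: "degree P = 2*n"
    unfolding P_def by (simp add: degree_add_eq_left)
  have "lead_coeff P = lead_coeff (q^n)"
    using deg_P deg_qn deg_En unfolding P_def by (simp add: coeff_eq_0)
  then have "lead_coeff P = 1"
    unfolding lead_coeff_power q_def by simp
  then have "lead_coeff h = 1"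
    unfolding P_factor lead_coeff_mult by simp
  moreover have "degree h = 4*k"
    using deg_P \<open>h \<noteq> 0\<close> unfolding P_factor by (simp add: degree_mult_eq n_def)
  moreover have "P = monic_quadratic a c ^ (2*k+1) + [:e ^ (2*k+1):]"
    by (simp only: P_def E_pow) (simp add: q_def n_def)
  ultimately show thesis
    using that[of h] P_factor h_no_root by simp
qed

lemma norm_monic_quadratic_shift:
  fixes x :: "'a::real_normed_field"
  assumes m: "0 \<le> m" "\<And>a c. a^2 \<le> c \<Longrightarrow> m \<le> norm (eval_real_poly (monic_quadratic a c) x)"
    and ac: "a^2 \<le> c" and at_min: "norm (eval_real_poly (monic_quadratic a c) x) = m"
    and e: "0 < e"
  shows "m^(2*k) * norm (eval_real_poly (monic_quadratic a (c + e)) x) \<le> m^(2*k+1) + e^(2*k+1)"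
proof -
  obtain h where factor: "monic_quadratic a c ^ (2*k+1) + [:e ^ (2*k+1):] = monic_quadratic a (c + e) * h"
    and "\<And>t. poly h t \<noteq> 0" "degree h = 4*k" "lead_coeff h = 1"
    using monic_quadratic_shift_cofactor[OF ac e] by blast
  then have "m^(2*k) \<le> norm (eval_real_poly h x)"
    using norm_eval_real_poly_without_real_roots[OF m] by fastforce
  then have "m^(2*k) * norm (eval_real_poly (monic_quadratic a (c + e)) x)
      \<le> norm (eval_real_poly (monic_quadratic a c ^ (2*k+1) + [:e ^ (2*k+1):]) x)"
    unfolding factor by (simp add: norm_mult mult.commute mult_right_mono)
  also have "\<dots> = norm (eval_real_poly (monic_quadratic a c) x ^ (2*k+1) + of_real (e ^ (2*k+1)))"
    by simp
  also have "\<dots> \<le> norm (eval_real_poly (monic_quadratic a c) x ^ (2*k+1)) + norm (of_real (e ^ (2*k+1)) :: 'a)"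
    by (rule norm_triangle_ineq)
  also have "\<dots> = m^(2*k+1) + e^(2*k+1)"
    by (simp only: norm_power at_min norm_of_real abs_of_pos[OF zero_less_power[OF e]])
  finally show ?thesis .
qed

lemma norm_monic_quadratic_gt:
  fixes x :: "'a::real_normed_field"
  assumes "a^2 \<le> c" and "8 * (norm x)^2 + 1 < c"
  shows "(norm x)^2 < norm (eval_real_poly (monic_quadratic a c) x)"
proof -
  have "0 \<le> c" using assms(1) zero_le_power2[of a] by linarith
  then have "c = norm (of_real c :: 'a)" by simp
  also have "\<dots> = norm (eval_real_poly (monic_quadratic a c) x - x*x + of_real (2*a) * x)"
    by (simp add: eval_monic_quadratic)
  also have "\<dots> \<le> norm (eval_real_poly (monic_quadratic a c) x) + norm (x*x) + norm (of_real (2*a) * x)"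
    by (metis add_right_mono norm_triangle_ineq norm_triangle_ineq4 order_trans)
  finally have "c \<le> norm (eval_real_poly (monic_quadratic a c) x) + (norm x)^2 + 2 * \<bar>a\<bar> * norm x"
    by (simp add: norm_mult power2_eq_square)
  moreover have "2 * \<bar>a\<bar> * norm x \<le> a^2/2 + 2 * (norm x)^2"
    using zero_le_power2[of "\<bar>a\<bar> - 2 * norm x"] by (simp add: power2_eq_square algebra_simps)
  ultimately show ?thesis using assms by linarith
qed

lemma compact_parabolic_segment: "compact {p :: real \<times> real. (fst p)^2 \<le> snd p \<and> snd p \<le> C}"
proof -
  have "{p :: real \<times> real. (fst p)^2 \<le> snd p \<and> snd p \<le> C} \<subseteq> {-(C+1)..C+1} \<times> {0..C}"
  proof
    fix p :: "real \<times> real" assume "p \<in> {p. (fst p)^2 \<le> snd p \<and> snd p \<le> C}"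
    then have "(fst p)^2 \<le> snd p" "snd p \<le> C" by simp_all
    moreover have "\<bar>fst p\<bar> \<le> (fst p)^2 + 1"
      using zero_le_power2[of "\<bar>fst p\<bar> - 1"] by (simp add: power2_eq_square algebra_simps)
    moreover have "0 \<le> snd p" using \<open>(fst p)^2 \<le> snd p\<close> zero_le_power2[of "fst p"] by linarith
    ultimately show "p \<in> {-(C+1)..C+1} \<times> {0..C}"
      by (auto simp: mem_Times_iff)
  qed
  then have "bounded {p :: real \<times> real. (fst p)^2 \<le> snd p \<and> snd p \<le> C}"
    by (rule bounded_subset[OF compact_imp_bounded[OF compact_Times[OF compact_Icc compact_Icc]]])
  moreover have "closed {p :: real \<times> real. (fst p)^2 \<le> snd p \<and> snd p \<le> C}"
    by (intro closed_Collect_conj closed_Collect_le continuous_intros)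
  ultimately show ?thesis
    by (simp add: compact_eq_bounded_closed)
qed

lemma monic_quadratic_norm_minimizer:
  fixes x :: "'a::real_normed_field"
  obtains a0 c0 where "a0^2 \<le> c0"
    and "\<And>a c. a^2 \<le> c \<Longrightarrow>
      norm (eval_real_poly (monic_quadratic a0 c0) x) \<le> norm (eval_real_poly (monic_quadratic a c) x)"
    and "\<And>a c. a^2 \<le> c \<Longrightarrow>
      norm (eval_real_poly (monic_quadratic a c) x) = norm (eval_real_poly (monic_quadratic a0 c0) x) \<Longrightarrow>
      c \<le> c0"
proof -
  define f where "f p = norm (eval_real_poly (monic_quadratic (fst p) (snd p)) x)" for p :: "real \<times> real"
  define K where "K = {p :: real \<times> real. (fst p)^2 \<le> snd p \<and> snd p \<le> 8 * (norm x)^2 + 1}"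
  have f_cont: "continuous_on UNIV f"
    unfolding f_def eval_monic_quadratic by (intro continuous_intros)
  have "(0, 0) \<in> K" unfolding K_def by simp
  then obtain p0 where p0: "p0 \<in> K" "\<And>p. p \<in> K \<Longrightarrow> f p0 \<le> f p"
    using continuous_attains_inf[OF compact_parabolic_segment _ continuous_on_subset[OF f_cont]]
    unfolding K_def by blast
  have "f p0 \<le> (norm x)^2"
    using p0(2)[OF \<open>(0, 0) \<in> K\<close>] unfolding f_def eval_monic_quadratic
    by (simp add: norm_mult power2_eq_square)
  then have in_K: "(a, c) \<in> K" if "a^2 \<le> c" "f (a, c) \<le> f p0" for a c
    using norm_monic_quadratic_gt[of a c x] that unfolding K_def f_def by force
  have global_min: "f p0 \<le> f (a, c)" if "a^2 \<le> c" for a c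
    using in_K[of a c] p0(2) that by fastforce
  define S where "S = K \<inter> {p. f p = f p0}"
  have "compact S"
    unfolding S_def K_def
    by (intro compact_Int_closed compact_parabolic_segment closed_Collect_eq f_cont continuous_intros)
  moreover have "S \<noteq> {}" using p0 unfolding S_def by auto
  ultimately obtain p1 where p1: "p1 \<in> S" "\<And>p. p \<in> S \<Longrightarrow> snd p \<le> snd p1"
    using continuous_attains_sup[of S snd] continuous_on_snd[OF continuous_on_id] by blast
  show thesis
  proof (rule that[of "fst p1" "snd p1"])
    show "(fst p1)^2 \<le> snd p1" using p1(1) unfolding S_def K_def by simp
    have f_p1: "f p1 = f p0" using p1(1) unfolding S_def by simp
    show "norm (eval_real_poly (monic_quadratic (fst p1) (snd p1)) x)
        \<le> norm (eval_real_poly (monic_quadratic a c) x)" if "a^2 \<le> c" for a c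
      using global_min[OF that] f_p1 unfolding f_def by simp
    show "c \<le> snd p1" if "a^2 \<le> c"
      "norm (eval_real_poly (monic_quadratic a c) x) = norm (eval_real_poly (monic_quadratic (fst p1) (snd p1)) x)"
      for a c
      using p1(2)[of "(a, c)"] in_K[of a c] that f_p1 unfolding S_def f_def by auto
  qed
qed

lemma real_normed_field_quadratic_root:
  fixes x :: "'a::real_normed_field"
  obtains a c where "a^2 \<le> c" "eval_real_poly (monic_quadratic a c) x = 0"
proof -
  obtain a0 c0 where ac0: "a0^2 \<le> c0"
    and min: "\<And>a c. a^2 \<le> c \<Longrightarrow>
      norm (eval_real_poly (monic_quadratic a0 c0) x) \<le> norm (eval_real_poly (monic_quadratic a c) x)"
    and max_c: "\<And>a c. a^2 \<le> c \<Longrightarrow>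
      norm (eval_real_poly (monic_quadratic a c) x) = norm (eval_real_poly (monic_quadratic a0 c0) x) \<Longrightarrow>
      c \<le> c0"
    using monic_quadratic_norm_minimizer[of x] by blast
  define m where "m = norm (eval_real_poly (monic_quadratic a0 c0) x)"
  have "m = 0"
  proof (rule ccontr)
    assume "m \<noteq> 0"
    then have "0 < m" unfolding m_def by simp
    define e where "e = m/2"
    define F where "F = norm (eval_real_poly (monic_quadratic a0 (c0 + e)) x)"
    have "0 < e" using \<open>0 < m\<close> unfolding e_def by simp
    have F_le: "F \<le> m + e * (1/4)^k" for k
    proof -
      have "m^(2*k) * F \<le> m^(2*k+1) + e^(2*k+1)"
        unfolding F_def using norm_monic_quadratic_shift[OF _ min ac0 _ \<open>0 < e\<close>, of k] m_def by simp
      also have "\<dots> = m^(2*k) * (m + e * (1/4)^k)"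
      proof -
        have "(m/2)^2 = m^2 * (1/4)" by (simp add: power_divide)
        then have "e^(2*k) = m^(2*k) * (1/4)^k"
          unfolding e_def power_mult by (simp only: power_mult_distrib)
        then show ?thesis by (simp add: algebra_simps)
      qed
      finally show ?thesis using \<open>0 < m\<close> by simp
    qed
    have "(\<lambda>k. m + e * (1/4)^k) \<longlonglongrightarrow> m + e * 0"
      by (intro tendsto_intros LIMSEQ_power_zero) simp
    then have "F \<le> m"
      using F_le by (intro LIMSEQ_le_const) auto
    moreover have "m \<le> F"
      unfolding F_def m_def using ac0 \<open>0 < e\<close> by (intro min) simp
    ultimately have "c0 + e \<le> c0"
      using ac0 \<open>0 < e\<close> by (intro max_c[of a0]) (simp_all add: F_def m_def)
    then show False using \<open>0 < e\<close> by simp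
  qed
  then show thesis using that ac0 unfolding m_def by simp
qed

lemma real_normed_field_real_or_imaginary:
  fixes x :: "'a::real_normed_field"
  obtains a where "x = of_real a"
  | a b j where "j * j = -1" "x = of_real a + of_real b * j"
proof -
  obtain a c where ac: "a^2 \<le> c" and root: "eval_real_poly (monic_quadratic a c) x = 0"
    by (rule real_normed_field_quadratic_root)
  define d where "d = c - a^2"
  have square: "(x - of_real a) * (x - of_real a) = - of_real d"
    using root unfolding eval_monic_quadratic d_def
    by (simp add: algebra_simps power2_eq_square)
  show thesis
  proof (cases "d = 0")
    case True
    then show thesis using square that(1)[of a] by simp
  next
    case False
    then have "0 < d" using ac unfolding d_def by simp
    define j where "j = (x - of_real a) / of_real (sqrt d)"
    have sqrt_d: "of_real (sqrt d) * of_real (sqrt d) = (of_real d :: 'a)"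
      using \<open>0 < d\<close> by (simp flip: of_real_mult)
    have "j * j = -1"
      using square sqrt_d \<open>0 < d\<close> unfolding j_def by (simp add: times_divide_times_eq)
    moreover have "x = of_real a + of_real (sqrt d) * j"
      using \<open>0 < d\<close> unfolding j_def by simp
    ultimately show thesis by (rule that(2))
  qed
qed

lemma abs_add_abs_le_norm_of_real_add_imaginary:
  fixes j :: "'a::real_normed_field"
  assumes j: "j * j = -1"
  shows "\<bar>a\<bar> + \<bar>b\<bar> \<le> 2 * norm (of_real a + of_real b * j)"
proof -
  have "(norm j)^2 = 1"
    using arg_cong[OF j, of norm] by (simp add: norm_mult power2_eq_square)
  then have "norm j = 1"
    using norm_ge_zero[of j] by (simp add: power2_eq_1_iff)
  define P where "P = norm (of_real a + of_real b * j)"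
  define Q where "Q = norm (of_real a - of_real b * j)"
  have "(of_real a + of_real b * j) * (of_real a - of_real b * j)
      = of_real a * of_real a - of_real b * of_real b * (j * j)"
    by (simp add: algebra_simps)
  also have "\<dots> = of_real (a^2 + b^2)"
    using j by (simp add: power2_eq_square)
  finally have PQ: "P * Q = a^2 + b^2"
    unfolding P_def Q_def by (metis norm_mult norm_of_real abs_of_nonneg sum_power2_ge_zero)
  have "Q \<le> \<bar>a\<bar> + \<bar>b\<bar>"
    unfolding Q_def using norm_triangle_ineq4[of "of_real a" "of_real b * j"] \<open>norm j = 1\<close>
    by (simp add: norm_mult)
  then have "P * Q \<le> P * (\<bar>a\<bar> + \<bar>b\<bar>)" unfolding P_def by (simp add: mult_left_mono)
  moreover have "(\<bar>a\<bar> + \<bar>b\<bar>)^2 \<le> 2 * (a^2 + b^2)"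
    using zero_le_power2[of "\<bar>a\<bar> - \<bar>b\<bar>"] by (simp add: power2_eq_square algebra_simps)
  ultimately have key: "(\<bar>a\<bar> + \<bar>b\<bar>) * (\<bar>a\<bar> + \<bar>b\<bar>) \<le> (2 * P) * (\<bar>a\<bar> + \<bar>b\<bar>)"
    using PQ by (simp add: power2_eq_square)
  show ?thesis
  proof (cases "\<bar>a\<bar> + \<bar>b\<bar> = 0")
    case True
    then have "a = 0" "b = 0" by (simp_all add: add_nonneg_eq_0_iff)
    then show ?thesis by simp
  next
    case False
    then have "0 < \<bar>a\<bar> + \<bar>b\<bar>" by simp
    with key show ?thesis
      unfolding P_def by (simp add: mult_le_cancel_right)
  qed
qed

lemma real_normed_field_coordinates:
  obtains coord :: "'a::real_normed_field \<Rightarrow> real \<times> real" and j :: 'a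
  where "\<And>x. x = of_real (fst (coord x)) + of_real (snd (coord x)) * j"
    and "\<And>x. norm (coord x) \<le> 2 * norm x"
proof -
  have "\<exists>j::'a. \<forall>x. \<exists>a b. x = of_real a + of_real b * j \<and> \<bar>a\<bar> + \<bar>b\<bar> \<le> 2 * norm x"
  proof (cases "\<exists>j::'a. j * j = -1")
    case True
    then obtain j :: 'a where j: "j * j = -1" by blast
    have "\<exists>a b. x = of_real a + of_real b * j \<and> \<bar>a\<bar> + \<bar>b\<bar> \<le> 2 * norm x" for x
    proof (cases x rule: real_normed_field_real_or_imaginary)
      case (1 a)
      then show ?thesis by (intro exI[of _ a] exI[of _ 0]) simp
    next
      case (2 a b k)
      have "(k - j) * (k + j) = k * k - j * j" by (simp add: algebra_simps)
      then have "k = j \<or> k = -j" using 2(1) j by (simp add: eq_neg_iff_add_eq_0)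
      then have "x = of_real a + of_real b * j \<or> x = of_real a + of_real (-b) * j"
        using 2(2) by auto
      then show ?thesis using abs_add_abs_le_norm_of_real_add_imaginary[OF j] by fastforce
    qed
    then show ?thesis by blast
  next
    case False
    have "\<exists>a b. x = of_real a + of_real b * 0 \<and> \<bar>a\<bar> + \<bar>b\<bar> \<le> 2 * norm x" for x :: 'a
    proof (cases x rule: real_normed_field_real_or_imaginary)
      case (1 a)
      then show ?thesis by (intro exI[of _ a] exI[of _ 0]) simp
    qed (use False in blast)
    then show ?thesis by blast
  qed
  then obtain j :: 'a where "\<forall>x. \<exists>p. x = of_real (fst p) + of_real (snd p) * j \<and> \<bar>fst p\<bar> + \<bar>snd p\<bar> \<le> 2 * norm x"
    by (metis fst_conv snd_conv)
  then obtain coord :: "'a \<Rightarrow> real \<times> real" where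
    coord: "\<And>x. x = of_real (fst (coord x)) + of_real (snd (coord x)) * j"
      "\<And>x. \<bar>fst (coord x)\<bar> + \<bar>snd (coord x)\<bar> \<le> 2 * norm x"
    by metis
  moreover have "norm (coord x) \<le> 2 * norm x" for x
    using norm_Pair_le[of "fst (coord x)" "snd (coord x)"] coord(2)[of x] by simp
  ultimately show thesis using that by blast
qed

lemma norm_vec_le_sum_norm: "norm (x :: 'a::real_normed_vector^'n) \<le> (\<Sum>i\<in>UNIV. norm (x $ i))"
  by (simp add: norm_vec_def L2_set_le_sum)

lemma norm_vec_smult:
  fixes x :: "'a::real_normed_div_algebra^'n"
  shows "norm (k *s x) = norm k * norm x"
proof -
  have "norm (k *s x) = sqrt ((norm k)^2 * (\<Sum>i\<in>UNIV. (norm (x $ i))^2))"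
    unfolding norm_vec_def L2_set_def by (simp add: norm_mult power_mult_distrib sum_distrib_left)
  then show ?thesis
    unfolding norm_vec_def L2_set_def by (simp add: real_sqrt_mult)
qed

lemma real_normed_field_matrix_convergent_subsequence:
  fixes X :: "nat \<Rightarrow> 'a::real_normed_field^'m^'n"
  assumes "bounded (range X)"
  obtains r L where "strict_mono r" "(X \<circ> r) \<longlonglongrightarrow> L"
proof -
  obtain coord and j :: 'a where coord: "\<And>x. x = of_real (fst (coord x)) + of_real (snd (coord x)) * j"
    and coord_bound: "\<And>x. norm (coord x) \<le> 2 * norm x"
    by (rule real_normed_field_coordinates) blast
  obtain B where B: "\<And>t. norm (X t) \<le> B"
    using assms unfolding bounded_iff by blast
  define Y where "Y t = (\<chi> i l. coord (X t $ i $ l))" for t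
  have entry_bound: "norm (Y t $ i $ l) \<le> 2 * B" for t i l
    using coord_bound[of "X t $ i $ l"] Finite_Cartesian_Product.norm_nth_le[of "X t $ i" l]
      Finite_Cartesian_Product.norm_nth_le[of "X t" i] B[of t]
    unfolding Y_def by simp
  have "norm (Y t) \<le> (\<Sum>i\<in>(UNIV::'n set). \<Sum>l\<in>(UNIV::'m set). 2 * B)" for t
  proof -
    have "norm (Y t) \<le> (\<Sum>i\<in>UNIV. \<Sum>l\<in>UNIV. norm (Y t $ i $ l))"
      by (rule order_trans[OF norm_vec_le_sum_norm sum_mono[OF norm_vec_le_sum_norm]])
    also have "\<dots> \<le> (\<Sum>i\<in>(UNIV::'n set). \<Sum>l\<in>(UNIV::'m set). 2 * B)"
      by (intro sum_mono entry_bound)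
    finally show ?thesis .
  qed
  then have "bounded (range Y)" unfolding bounded_iff by blast
  then obtain r L where r: "strict_mono r" and L: "(Y \<circ> r) \<longlonglongrightarrow> L"
    using bounded_imp_convergent_subsequence by blast
  have "X t = (\<chi> i l. of_real (fst (Y t $ i $ l)) + of_real (snd (Y t $ i $ l)) * j)" for t
    unfolding Y_def using coord by (simp add: vec_eq_iff)
  moreover have "(\<lambda>t. \<chi> i l. of_real (fst (Y (r t) $ i $ l)) + of_real (snd (Y (r t) $ i $ l)) * j)
      \<longlonglongrightarrow> (\<chi> i l. of_real (fst (L $ i $ l)) + of_real (snd (L $ i $ l)) * j)"
    using L unfolding o_def by (intro tendsto_vec_lambda tendsto_intros)
  ultimately show thesis
    using that[OF r] unfolding o_def by simp
qed

section \<open>Algebraic and geometric multiplicity\<close>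

lemma slice_mix_entry: "slice_mix T \<gamma> $ i $ j = (\<Sum>k\<in>UNIV. \<gamma> $ k * T $ i $ j $ k)"
  by (simp add: slice_mix_def slice_def)

lemma kpoly_sum: "finite S \<Longrightarrow> (\<And>s. s \<in> S \<Longrightarrow> kpoly (f s)) \<Longrightarrow> kpoly (\<lambda>\<gamma>. \<Sum>s\<in>S. f s \<gamma>)"
  by (induction S rule: finite_induct) (auto intro: kpoly.intros)

lemma kpoly_prod: "finite S \<Longrightarrow> (\<And>s. s \<in> S \<Longrightarrow> kpoly (f s)) \<Longrightarrow> kpoly (\<lambda>\<gamma>. \<Prod>s\<in>S. f s \<gamma>)"
  by (induction S rule: finite_induct) (auto intro: kpoly.intros)

lemma kpoly_det:
  fixes A :: "'a::comm_ring_1^'k \<Rightarrow> 'a^'n^'n"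
  assumes "\<And>i j. kpoly (\<lambda>\<gamma>. A \<gamma> $ i $ j)"
  shows "kpoly (\<lambda>\<gamma>. det (A \<gamma>))"
  unfolding det_def by (intro kpoly_sum kpoly_mult kpoly_const kpoly_prod assms) auto

lemma kpoly_slice_mix_entry: "kpoly (\<lambda>\<gamma>. slice_mix T \<gamma> $ i $ j)"
  unfolding slice_mix_entry by (intro kpoly_sum kpoly_mult kpoly_var kpoly_const) auto

lemma kpoly_on_line:
  fixes \<gamma>0 u :: "'a::comm_ring_1^'k"
  assumes "kpoly f"
  obtains G where "\<And>t. f (\<gamma>0 + t *s u) = poly G t"
proof -
  from assms have "\<exists>G. \<forall>t. f (\<gamma>0 + t *s u) = poly G t"
  proof (induction rule: kpoly.induct)
    case (kpoly_const c)
    show ?case by (intro exI[of _ "[:c:]"]) simp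
  next
    case (kpoly_var k)
    show ?case by (intro exI[of _ "[:\<gamma>0 $ k, u $ k:]"]) (simp add: algebra_simps)
  next
    case (kpoly_add f g)
    then obtain F G where "\<forall>t. f (\<gamma>0 + t *s u) = poly F t" "\<forall>t. g (\<gamma>0 + t *s u) = poly G t" by blast
    then show ?case by (intro exI[of _ "F + G"]) simp
  next
    case (kpoly_mult f g)
    then obtain F G where "\<forall>t. f (\<gamma>0 + t *s u) = poly F t" "\<forall>t. g (\<gamma>0 + t *s u) = poly G t" by blast
    then show ?case by (intro exI[of _ "F * G"]) simp
  qed
  then show thesis using that by blast
qed

lemma det_affine_pencil:
  fixes A B :: "'a::comm_ring_1^'n^'n"
  obtains D where "degree D \<le> CARD('n)" "\<And>t. det (\<chi> i j. A $ i $ j + t * B $ i $ j) = poly D t"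
proof
  define D where "D = (\<Sum>p\<in>{p. p permutes (UNIV::'n set)}.
      smult (of_int (sign p)) (\<Prod>i\<in>UNIV. [:A $ i $ p i, B $ i $ p i:]))"
  show "det (\<chi> i j. A $ i $ j + t * B $ i $ j) = poly D t" for t
    unfolding D_def det_def by (simp add: poly_sum poly_prod algebra_simps)
  have "degree (\<Prod>i\<in>UNIV. [:A $ i $ p i, B $ i $ p i:]) \<le> (\<Sum>i\<in>(UNIV::'n set). 1)" for p
    by (rule order_trans[OF degree_prod_sum_le sum_mono]) auto
  then show "degree D \<le> CARD('n)"
    unfolding D_def by (intro degree_sum_le order_trans[OF degree_smult_le]) auto
qed

lemma linform_axis: "linform c (axis l 1) = c $ l"
  unfolding linform_def axis_def by (simp add: if_distrib cong: if_cong)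

lemma linform_smult_left: "linform (k *s c) \<gamma> = k * linform c \<gamma>"
  unfolding linform_def by (simp add: sum_distrib_left mult.assoc)

lemma linform_add: "linform c (\<gamma> + \<delta>) = linform c \<gamma> + linform c \<delta>"
  unfolding linform_def by (simp add: algebra_simps sum.distrib)

lemma linform_smult_right: "linform c (t *s \<gamma>) = t * linform c \<gamma>"
  unfolding linform_def by (simp add: sum_distrib_left mult_ac)

lemma slice_mix_mult_jge_vector:
  assumes "\<And>l. slice T l *v x = lam $ l *s y"
  shows "slice_mix T \<gamma> *v x = linform lam \<gamma> *s y"
proof -
  have "(slice_mix T \<gamma> *v x) $ i = (\<Sum>k\<in>UNIV. \<gamma> $ k * (slice T k *v x) $ i)" for i
    unfolding matrix_vector_mult_def
    by (simp add: slice_mix_def slice_def sum_distrib_left sum_distrib_right algebra_simps) (rule sum.swap)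
  then show ?thesis
    unfolding assms linform_def by (simp add: vec_eq_iff sum_distrib_left mult_ac)
qed

lemma det_scale_columns:
  fixes N :: "'a::comm_ring_1^'n^'n"
  shows "det (\<chi> i j. d j * N $ i $ j) = prod d UNIV * det N"
proof -
  have "det (\<chi> i j. d j * N $ i $ j) = det (transpose (\<chi> i j. d j * N $ i $ j))"
    by simp
  also have "transpose (\<chi> i j. d j * N $ i $ j) = (\<chi> j. d j *s (\<chi> i. N $ i $ j))"
    by (simp add: transpose_def vec_eq_iff)
  also have "det \<dots> = prod d UNIV * det (\<chi> j i. N $ i $ j)"
    by (rule det_rows_mul)
  also have "(\<chi> j i. N $ i $ j) = transpose N"
    by (simp add: transpose_def)
  finally show ?thesis by simp
qed

lemma matrix_vector_mult_nonzero:
  fixes A :: "'a::field^'n^'n"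
  assumes "det A \<noteq> 0" and "x \<noteq> 0"
  shows "A *v x \<noteq> 0"
proof
  assume "A *v x = 0"
  obtain A' where "A' ** A = mat 1"
    using assms(1) by (metis invertible_det_nz invertible_left_inverse)
  then have "x = A' *v (A *v x)"
    by (simp add: matrix_vector_mul_assoc)
  with \<open>A *v x = 0\<close> \<open>x \<noteq> 0\<close> show False by simp
qed

lemma independent_extends_to_invertible_matrix:
  fixes B :: "('a::field^'n) set"
  assumes "vec.independent B"
  obtains P :: "'a^'n^'n" and I where "invertible P" "card I = card B" "\<And>s. s \<in> I \<Longrightarrow> column s P \<in> B"
proof -
  define E where "E = vec.extend_basis B"
  have "B \<subseteq> E" "vec.independent E" "vec.span E = UNIV"
    using vec.extend_basis_superset vec.independent_extend_basis vec.span_extend_basis assms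
    unfolding E_def by auto
  then have "finite E" "card E = CARD('n)"
    using vec.finiteI_independent vec.basis_card_eq_dim[of E UNIV] vec_dim_card by auto
  then obtain f where f: "bij_betw f (UNIV::'n set) E"
    using finite_same_card_bij[of "UNIV::'n set" E] by auto
  define P :: "'a^'n^'n" where "P = (\<chi> i s. f s $ i)"
  have column_P: "column s P = f s" for s
    by (simp add: column_def P_def vec_eq_iff)
  then have "columns P = E"
    using f unfolding columns_def bij_betw_def by auto
  then have "invertible P"
    using \<open>vec.span E = UNIV\<close> by (simp add: invertible_right_inverse matrix_right_invertible_span_columns)
  moreover have "card (f -` B) = card B"
    using f \<open>B \<subseteq> E\<close> by (intro card_vimage_inj) (auto simp: bij_betw_def)
  ultimately show thesis
    by (intro that[of P "f -` B"]) (simp_all add: column_P)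
qed

lemma det_columns_common_factor:
  fixes A :: "'a::comm_ring_1^'n^'n"
  assumes "\<And>s. s \<in> I \<Longrightarrow> column s A = c *s y s"
  shows "det A = c ^ card I * det (\<chi> i s. if s \<in> I then y s $ i else A $ i $ s)"
proof -
  define N where "N = (\<chi> i s. if s \<in> I then y s $ i else A $ i $ s)"
  have "A = (\<chi> i s. (if s \<in> I then c else 1) * N $ i $ s)"
    using assms unfolding N_def by (simp add: vec_eq_iff column_def)
  then have "det A = (\<Prod>s\<in>UNIV. if s \<in> I then c else 1) * det N"
    using det_scale_columns[of "\<lambda>s. if s \<in> I then c else 1" N] by simp
  then show ?thesis
    unfolding N_def by (simp add: prod.If_cases)
qed

lemma lin_pow_dvd_pT_independent_jge_vectors:
  fixes T :: "'a::field^'k^'r^'r"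
  assumes jge: "B \<subseteq> {x. jge_pair T lam x}" and indep: "vec.independent B"
  shows "lin_pow_dvd lam (card B) (pT T)"
proof -
  obtain P :: "'a^'r^'r" and I where "invertible P" "card I = card B" and cols: "\<And>s. s \<in> I \<Longrightarrow> column s P \<in> B"
    using independent_extends_to_invertible_matrix[OF indep] by metis
  then have det_P: "det P \<noteq> 0" by (simp add: invertible_det_nz)
  have "\<forall>s\<in>I. \<exists>y. \<forall>l. slice T l *v column s P = lam $ l *s y"
    using cols jge unfolding jge_pair_def by blast
  then obtain y where y: "\<And>s l. s \<in> I \<Longrightarrow> slice T l *v column s P = lam $ l *s y s"
    by metis
  define N where "N \<gamma> = (\<chi> i s. if s \<in> I then y s $ i else (slice_mix T \<gamma> ** P) $ i $ s)" for \<gamma>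
  have "column s (slice_mix T \<gamma> ** P) = linform lam \<gamma> *s y s" if "s \<in> I" for s \<gamma>
  proof -
    have "column s (slice_mix T \<gamma> ** P) = slice_mix T \<gamma> *v column s P"
      by (simp add: vec_eq_iff column_def matrix_matrix_mult_def matrix_vector_mult_def)
    then show ?thesis
      using slice_mix_mult_jge_vector y that by metis
  qed
  then have "pT T \<gamma> * det P = linform lam \<gamma> ^ card B * det (N \<gamma>)" for \<gamma>
    unfolding pT_def det_mul[symmetric] N_def \<open>card I = card B\<close>[symmetric]
    by (rule det_columns_common_factor)
  then have factor: "pT T \<gamma> = linform lam \<gamma> ^ card B * (det (N \<gamma>) * inverse (det P))" for \<gamma>
    using det_P by (simp add: field_simps)
  have "kpoly (\<lambda>\<gamma>. N \<gamma> $ i $ s)" for i s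
  proof (cases "s \<in> I")
    case True
    then show ?thesis
      unfolding N_def by (simp add: kpoly_const)
  next
    case False
    have "kpoly (\<lambda>\<gamma>. \<Sum>j\<in>UNIV. slice_mix T \<gamma> $ i $ j * P $ j $ s)"
      by (intro kpoly_sum kpoly_mult kpoly_slice_mix_entry kpoly_const) simp
    then show ?thesis
      using False unfolding N_def by (simp add: matrix_matrix_mult_def)
  qed
  then have "kpoly (\<lambda>\<gamma>. det (N \<gamma>) * inverse (det P))"
    by (rule kpoly_mult[OF kpoly_det kpoly_const])
  with factor show ?thesis
    unfolding lin_pow_dvd_def by (intro exI[of _ "\<lambda>\<gamma>. det (N \<gamma>) * inverse (det P)"]) simp
qed

lemma pT_on_line:
  fixes T :: "'a::field^'k^'r^'r"
  obtains D where "degree D \<le> CARD('r)" "\<And>t. pT T (\<gamma>0 + t *s u) = poly D t"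
proof -
  obtain D where "degree D \<le> CARD('r)"
    and D: "\<And>t. det (\<chi> i j. slice_mix T \<gamma>0 $ i $ j + t * slice_mix T u $ i $ j) = poly D t"
    using det_affine_pencil[of "slice_mix T \<gamma>0" "slice_mix T u"] by blast
  moreover have "slice_mix T (\<gamma>0 + t *s u) = (\<chi> i j. slice_mix T \<gamma>0 $ i $ j + t * slice_mix T u $ i $ j)" for t
    by (simp add: vec_eq_iff slice_mix_entry algebra_simps sum.distrib sum_distrib_left)
  ultimately show thesis
    using that[of D] unfolding pT_def by simp
qed

lemma lin_pow_dvd_pT_le_card:
  fixes T :: "'a::field_char_0^'k^'r^'r"
  assumes "slice_mix_invertible T" and "lam \<noteq> 0" and "lin_pow_dvd lam m (pT T)"
  shows "m \<le> CARD('r)"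
proof -
  obtain \<gamma>0 where inv: "det (slice_mix T \<gamma>0) \<noteq> 0"
    using assms(1) unfolding slice_mix_invertible_def invertible_det_nz by blast
  obtain g where "kpoly g" and pT_g: "\<And>\<gamma>. pT T \<gamma> = linform lam \<gamma> ^ m * g \<gamma>"
    using assms(3) unfolding lin_pow_dvd_def by blast
  obtain k0 where k0: "lam $ k0 \<noteq> 0"
    using assms(2) by (metis vec_eq_iff zero_index)
  define u :: "'a^'k" where "u = axis k0 1"
  obtain G where G: "\<And>t. g (\<gamma>0 + t *s u) = poly G t"
    using kpoly_on_line[OF \<open>kpoly g\<close>] by blast
  obtain D where "degree D \<le> CARD('r)" and D: "\<And>t. pT T (\<gamma>0 + t *s u) = poly D t"
    using pT_on_line by blast
  define lin where "lin = [:linform lam \<gamma>0, lam $ k0:]"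
  have "linform lam (\<gamma>0 + t *s u) = poly lin t" for t
    unfolding lin_def u_def linform_add linform_smult_right linform_axis by simp
  then have "poly D t = poly (lin ^ m * G) t" for t
    using pT_g D G by (metis poly_mult poly_power)
  then have D_eq: "D = lin ^ m * G"
    using poly_eq_poly_eq_iff by blast
  have "D \<noteq> 0"
    using D[of 0] inv unfolding pT_def by auto
  then have "G \<noteq> 0" unfolding D_eq by auto
  moreover have "degree lin = 1" unfolding lin_def using k0 by simp
  ultimately have "degree D = m + degree G"
    unfolding D_eq using k0 by (simp add: degree_mult_eq degree_power_eq lin_def)
  then show ?thesis using \<open>degree D \<le> CARD('r)\<close> by simp
qed

lemma gm_le_am:
  fixes T :: "'a::field_char_0^'k^'r^'r"
  assumes "slice_mix_invertible T" and "lam \<noteq> 0"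
  shows "gm T lam \<le> am T lam"
proof -
  obtain B where B: "B \<subseteq> {x. jge_pair T lam x}" "vec.independent B"
    "card B = vec.dim {x. jge_pair T lam x}"
    by (rule vec.basis_exists[of "{x. jge_pair T lam x}"])
  have "card B \<le> am T lam"
    unfolding am_def
    by (rule Greatest_le_nat[where P = "\<lambda>m. lin_pow_dvd lam m (pT T)",
          OF lin_pow_dvd_pT_independent_jge_vectors[OF B(1,2)] lin_pow_dvd_pT_le_card[OF assms]])
  then show ?thesis unfolding gm_def B(3) .
qed

lemma jge_pair_linform_factor:
  fixes T :: "'a::field^'k^'r^'r"
  assumes "slice_mix_invertible T" and "jge_pair T lam x"
  obtains g where "kpoly g" "g \<noteq> (\<lambda>_. 0)" "\<And>\<gamma>. pT T \<gamma> = linform lam \<gamma> * g \<gamma>"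
proof -
  have "x \<noteq> 0" using assms(2) unfolding jge_pair_def by simp
  then have "lin_pow_dvd lam (card {x}) (pT T)"
    using assms(2) by (intro lin_pow_dvd_pT_independent_jge_vectors) auto
  then obtain g where "kpoly g" and pT_g: "\<And>\<gamma>. pT T \<gamma> = linform lam \<gamma> * g \<gamma>"
    unfolding lin_pow_dvd_def by auto
  moreover have "g \<noteq> (\<lambda>_. 0)"
  proof
    assume "g = (\<lambda>_. 0)"
    obtain \<gamma>0 where "det (slice_mix T \<gamma>0) \<noteq> 0"
      using assms(1) unfolding slice_mix_invertible_def invertible_det_nz by blast
    with pT_g[of \<gamma>0] \<open>g = (\<lambda>_. 0)\<close> show False
      unfolding pT_def by simp
  qed
  ultimately show thesis using that by blast
qed

section \<open>Border rank and linear factors\<close>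

lemma rank1_entry: "rank1 a b c $ i $ j $ k = a $ i * b $ j * c $ k"
  by (simp add: rank1_def)

lemma ex_bij_betw_lessThan_CARD: "\<exists>h :: nat \<Rightarrow> 'a::finite. bij_betw h {..<CARD('a)} UNIV"
  using ex_bij_betw_nat_finite[of "UNIV :: 'a set"] by (auto simp: lessThan_atLeast0)

lemma ex_rank1_decomposition:
  fixes T :: "'a::comm_ring_1^'k^'r^'r"
  obtains n :: nat and a b c where "T = (\<Sum>s<n. rank1 (a s) (b s) (c s))"
proof -
  define a :: "'r \<times> 'r \<Rightarrow> 'a^'r" where "a p = axis (fst p) 1" for p
  define b :: "'r \<times> 'r \<Rightarrow> 'a^'r" where "b p = axis (snd p) 1" for p
  define c :: "'r \<times> 'r \<Rightarrow> 'a^'k" where "c p = (\<chi> k. T $ fst p $ snd p $ k)" for p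
  have "(\<Sum>p\<in>UNIV. rank1 (a p) (b p) (c p)) $ i $ j $ k = T $ i $ j $ k" for i j k
  proof -
    have "(\<Sum>p\<in>UNIV. rank1 (a p) (b p) (c p)) $ i $ j $ k
        = (\<Sum>p\<in>UNIV. if p = (i, j) then T $ i $ j $ k else 0)"
      unfolding sum_component rank1_entry
    proof (rule sum.cong)
      fix p :: "'r \<times> 'r"
      show "a p $ i * b p $ j * c p $ k = (if p = (i, j) then T $ i $ j $ k else 0)"
        unfolding a_def b_def c_def axis_def by (cases p) auto
    qed simp
    then show ?thesis by simp
  qed
  then have "T = (\<Sum>p\<in>UNIV. rank1 (a p) (b p) (c p))"
    by (simp add: vec_eq_iff)
  moreover obtain h :: "nat \<Rightarrow> 'r \<times> 'r" where "bij_betw h {..<CARD('r \<times> 'r)} UNIV"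
    using ex_bij_betw_lessThan_CARD by blast
  ultimately have "T = (\<Sum>s<CARD('r \<times> 'r). rank1 ((a \<circ> h) s) ((b \<circ> h) s) ((c \<circ> h) s))"
    using sum.reindex_bij_betw[of h "{..<CARD('r \<times> 'r)}" UNIV "\<lambda>p. rank1 (a p) (b p) (c p)"]
    by simp
  then show thesis by (rule that)
qed

lemma tensor_rank_decomposition:
  fixes T :: "'a::comm_ring_1^'k^'r^'r"
  obtains a b c where "T = (\<Sum>s<tensor_rank T. rank1 (a s) (b s) (c s))"
proof -
  obtain n :: nat and a b c where decomp: "T = (\<Sum>s<n. rank1 (a s) (b s) (c s))"
    by (rule ex_rank1_decomposition)
  have "\<exists>a b c. T = (\<Sum>s<n. rank1 (a s) (b s) (c s))"
    by (intro exI) (rule decomp)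
  then have "\<exists>a b c. T = (\<Sum>s<tensor_rank T. rank1 (a s) (b s) (c s))"
    unfolding tensor_rank_def by (rule LeastI)
  then show thesis
    using that by (elim exE) assumption
qed

lemma tensor_rank_le_card_decomposition:
  fixes T :: "'a::comm_ring_1^'k^'r^'r"
  assumes "tensor_rank T \<le> CARD('r)"
  obtains a b c where "T = (\<Sum>\<sigma>\<in>(UNIV::'r set). rank1 (a \<sigma>) (b \<sigma>) (c \<sigma>))"
proof -
  obtain a b c where abc: "T = (\<Sum>s<tensor_rank T. rank1 (a s) (b s) (c s))"
    by (rule tensor_rank_decomposition)
  define a' where "a' s = (if s < tensor_rank T then a s else 0)" for s
  have "(\<Sum>s<CARD('r). rank1 (a' s) (b s) (c s)) = (\<Sum>s<tensor_rank T. rank1 (a' s) (b s) (c s))"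
    using assms by (intro sum.mono_neutral_right) (auto simp: a'_def rank1_def vec_eq_iff)
  also have "\<dots> = (\<Sum>s<tensor_rank T. rank1 (a s) (b s) (c s))"
    by (simp add: a'_def)
  also have "\<dots> = T" by (rule abc[symmetric])
  finally have T_sum: "T = (\<Sum>s<CARD('r). rank1 (a' s) (b s) (c s))" ..
  obtain h :: "nat \<Rightarrow> 'r" where "bij_betw h {..<CARD('r)} UNIV"
    using ex_bij_betw_lessThan_CARD by blast
  then have h': "bij_betw (inv_into {..<CARD('r)} h) UNIV {..<CARD('r)}"
    by (rule bij_betw_inv_into)
  have "T = (\<Sum>\<sigma>\<in>UNIV. rank1 ((a' \<circ> inv_into {..<CARD('r)} h) \<sigma>)
      ((b \<circ> inv_into {..<CARD('r)} h) \<sigma>) ((c \<circ> inv_into {..<CARD('r)} h) \<sigma>))"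
    unfolding T_sum using sum.reindex_bij_betw[OF h', of "\<lambda>s. rank1 (a' s) (b s) (c s)"] by simp
  then show thesis by (rule that)
qed

lemma slice_eq_slice_mix_axis: "slice T l = slice_mix T (axis l 1)"
  unfolding slice_mix_def axis_def by (simp add: vec_eq_iff if_distrib[of "\<lambda>x. x * _"] cong: if_cong)

lemma slice_mix_rank1_sum:
  fixes a b :: "'r \<Rightarrow> 'a::comm_ring_1^'r" and c :: "'r \<Rightarrow> 'a^'k"
  shows "slice_mix (\<Sum>\<sigma>\<in>UNIV. rank1 (a \<sigma>) (b \<sigma>) (c \<sigma>)) \<gamma>
    = (\<chi> i \<sigma>. linform (c \<sigma>) \<gamma> * a \<sigma> $ i) ** (\<chi> \<sigma> j. b \<sigma> $ j)"
proof -
  have "(\<Sum>k\<in>UNIV. \<Sum>\<sigma>\<in>UNIV. \<gamma> $ k * (a \<sigma> $ i * b \<sigma> $ j * c \<sigma> $ k))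
      = (\<Sum>\<sigma>\<in>UNIV. linform (c \<sigma>) \<gamma> * a \<sigma> $ i * b \<sigma> $ j)" for i j
    unfolding linform_def
    by (subst sum.swap) (simp add: sum_distrib_left sum_distrib_right mult_ac)
  then show ?thesis
    by (simp add: vec_eq_iff slice_mix_entry matrix_matrix_mult_def rank1_entry sum_distrib_left)
qed

lemma pT_rank1_sum:
  fixes a b :: "'r \<Rightarrow> 'a::field^'r" and c :: "'r \<Rightarrow> 'a^'k"
  shows "pT (\<Sum>\<sigma>\<in>UNIV. rank1 (a \<sigma>) (b \<sigma>) (c \<sigma>)) \<gamma>
    = (\<Prod>\<sigma>\<in>UNIV. linform (c \<sigma>) \<gamma>) * det (\<chi> i \<sigma>. a \<sigma> $ i) * det (\<chi> \<sigma> j. b \<sigma> $ j)"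
  unfolding pT_def slice_mix_rank1_sum det_mul
  using det_scale_columns[of "\<lambda>\<sigma>. linform (c \<sigma>) \<gamma>" "\<chi> i \<sigma>. a \<sigma> $ i"] by simp

text \<open>The vectors \<open>C $ \<sigma>\<close> define the linear factors of \<open>pT T\<close>, normalised to \<open>1\<close> at \<open>\<gamma>0\<close>, and
  \<open>W $ \<sigma>\<close> is a unit JGE vector for \<open>C $ \<sigma>\<close> whose partner is \<open>slice_mix T \<gamma>0 *v W $ \<sigma>\<close>.
  Unlike a rank decomposition, these conditions are closed under limits.\<close>

definition jge_factorization :: "'a::real_normed_field^'k^'r^'r \<Rightarrow> 'a^'k \<Rightarrow> 'a^'k^'r \<Rightarrow> 'a^'r^'r \<Rightarrow> bool"
  where "jge_factorization T \<gamma>0 C W \<longleftrightarrow>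
    (\<forall>\<gamma>. pT T \<gamma> = pT T \<gamma>0 * (\<Prod>\<sigma>\<in>UNIV. linform (C $ \<sigma>) \<gamma>)) \<and>
    (\<forall>\<sigma>. norm (W $ \<sigma>) = 1 \<and> (\<forall>l. slice T l *v W $ \<sigma> = C $ \<sigma> $ l *s (slice_mix T \<gamma>0 *v W $ \<sigma>)))"

lemma jge_factorization_rank1_sum:
  fixes a b :: "'r \<Rightarrow> 'a::real_normed_field^'r" and c :: "'r \<Rightarrow> 'a^'k"
  assumes S: "S = (\<Sum>\<sigma>\<in>UNIV. rank1 (a \<sigma>) (b \<sigma>) (c \<sigma>))"
    and det_S: "det (slice_mix S \<gamma>0) \<noteq> 0"
  obtains C W where "jge_factorization S \<gamma>0 C W"
proof -
  define A :: "'a^'r^'r" where "A = (\<chi> i \<sigma>. a \<sigma> $ i)"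
  define B :: "'a^'r^'r" where "B = (\<chi> \<sigma> j. b \<sigma> $ j)"
  define d where "d \<sigma> = linform (c \<sigma>) \<gamma>0" for \<sigma>
  define C :: "'a^'k^'r" where "C = (\<chi> \<sigma>. (1 / d \<sigma>) *s c \<sigma>)"
  have pT_S: "pT S \<gamma> = (\<Prod>\<sigma>\<in>UNIV. linform (c \<sigma>) \<gamma>) * det A * det B" for \<gamma>
    unfolding S A_def B_def by (rule pT_rank1_sum)
  then have "(\<Prod>\<sigma>\<in>UNIV. d \<sigma>) \<noteq> 0" "det B \<noteq> 0"
    using det_S unfolding pT_def d_def by auto
  then have d_nz: "d \<sigma> \<noteq> 0" for \<sigma> by simp
  have linform_C: "linform (c \<sigma>) \<gamma> = d \<sigma> * linform (C $ \<sigma>) \<gamma>" for \<sigma> \<gamma>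
    unfolding C_def using d_nz[of \<sigma>] by (simp add: linform_smult_left)
  have factor: "pT S \<gamma> = pT S \<gamma>0 * (\<Prod>\<sigma>\<in>UNIV. linform (C $ \<sigma>) \<gamma>)" for \<gamma>
    unfolding pT_S linform_C[of _ \<gamma>] d_def[symmetric] by (simp add: prod.distrib mult_ac)
  obtain B' where B': "B ** B' = mat 1"
    using \<open>det B \<noteq> 0\<close> by (metis invertible_det_nz invertible_right_inverse)
  define v where "v \<sigma> = B' *v axis \<sigma> 1" for \<sigma>
  have "B *v v \<sigma> = axis \<sigma> 1" for \<sigma>
    unfolding v_def by (simp add: matrix_vector_mul_assoc B')
  then have v_nz: "v \<sigma> \<noteq> 0" for \<sigma>
    by (metis axis_eq_0_iff matrix_vector_mult_0_right zero_neq_one)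
  have mix_v: "slice_mix S \<gamma> *v v \<sigma> = linform (c \<sigma>) \<gamma> *s (\<chi> i. a \<sigma> $ i)" for \<gamma> \<sigma>
    unfolding S slice_mix_rank1_sum matrix_vector_mul_assoc[symmetric] B_def[symmetric]
      \<open>B *v v \<sigma> = axis \<sigma> 1\<close>
    by (simp add: vec_eq_iff matrix_vector_mult_def axis_def if_distrib cong: if_cong)
  have eig_v: "slice S l *v v \<sigma> = C $ \<sigma> $ l *s (slice_mix S \<gamma>0 *v v \<sigma>)" for \<sigma> l
    unfolding slice_eq_slice_mix_axis mix_v linform_axis
    using d_nz[of \<sigma>] by (simp add: C_def d_def vec_eq_iff)
  define W :: "'a^'r^'r" where "W = (\<chi> \<sigma>. of_real (inverse (norm (v \<sigma>))) *s v \<sigma>)"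
  have "norm (W $ \<sigma>) = 1" for \<sigma>
    unfolding W_def using v_nz[of \<sigma>] by (simp add: norm_vec_smult norm_inverse)
  moreover have "slice S l *v W $ \<sigma> = C $ \<sigma> $ l *s (slice_mix S \<gamma>0 *v W $ \<sigma>)" for \<sigma> l
    unfolding W_def by (simp add: vector_scalar_commute eig_v mult.commute)
  ultimately show thesis
    using factor that[of C W] unfolding jge_factorization_def by blast
qed

lemma tendsto_slice_mix [tendsto_intros]:
  fixes S :: "'b \<Rightarrow> 'a::real_normed_field^'k^'r^'r"
  shows "(S \<longlongrightarrow> T) F \<Longrightarrow> ((\<lambda>t. slice_mix (S t) \<gamma>) \<longlongrightarrow> slice_mix T \<gamma>) F"
  unfolding slice_mix_def slice_def by (intro tendsto_intros)

lemma tendsto_matrix_vector_mult [tendsto_intros]: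
  fixes X :: "'b \<Rightarrow> 'a::real_normed_field^'n^'m"
  shows "(X \<longlongrightarrow> A) F \<Longrightarrow> (Y \<longlongrightarrow> y) F \<Longrightarrow> ((\<lambda>t. X t *v Y t) \<longlongrightarrow> A *v y) F"
  unfolding matrix_vector_mult_def by (intro tendsto_intros)

lemma tendsto_vector_smult [tendsto_intros]:
  fixes Y :: "'b \<Rightarrow> 'a::real_normed_field^'n"
  shows "(f \<longlongrightarrow> c) F \<Longrightarrow> (Y \<longlongrightarrow> y) F \<Longrightarrow> ((\<lambda>t. f t *s Y t) \<longlongrightarrow> c *s y) F"
  unfolding vector_scalar_mult_def by (intro tendsto_intros)

lemma tendsto_det [tendsto_intros]:
  fixes X :: "'b \<Rightarrow> 'a::real_normed_field^'n^'n"
  shows "(X \<longlongrightarrow> A) F \<Longrightarrow> ((\<lambda>t. det (X t)) \<longlongrightarrow> det A) F"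
  unfolding det_def by (intro tendsto_intros)

lemma tendsto_linform [tendsto_intros]:
  fixes C :: "'b \<Rightarrow> 'a::real_normed_field^'k"
  shows "(C \<longlongrightarrow> c) F \<Longrightarrow> ((\<lambda>t. linform (C t) \<gamma>) \<longlongrightarrow> linform c \<gamma>) F"
  unfolding linform_def by (intro tendsto_intros)

lemma tendsto_pT [tendsto_intros]:
  fixes S :: "'b \<Rightarrow> 'a::real_normed_field^'k^'r^'r"
  shows "(S \<longlongrightarrow> T) F \<Longrightarrow> ((\<lambda>t. pT (S t) \<gamma>) \<longlongrightarrow> pT T \<gamma>) F"
  unfolding pT_def by (intro tendsto_intros)

lemma tendsto_slice [tendsto_intros]:
  fixes S :: "'b \<Rightarrow> 'a::real_normed_field^'k^'r^'r"
  shows "(S \<longlongrightarrow> T) F \<Longrightarrow> ((\<lambda>t. slice (S t) l) \<longlongrightarrow> slice T l) F"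
  unfolding slice_eq_slice_mix_axis by (rule tendsto_slice_mix)

lemma tendsto_coefficient_of_smult:
  fixes c :: "'b \<Rightarrow> 'a::real_normed_field" and v :: "'b \<Rightarrow> 'a^'n"
  assumes lim: "((\<lambda>t. c t *s v t) \<longlongrightarrow> u) F" and v: "(v \<longlongrightarrow> v0) F" "v0 \<noteq> 0" and "F \<noteq> bot"
  obtains c0 where "(c \<longlongrightarrow> c0) F" "u = c0 *s v0"
proof -
  obtain i where "v0 $ i \<noteq> 0"
    using v(2) by (metis vec_eq_iff zero_index)
  have "((\<lambda>t. (c t *s v t) $ i / v t $ i) \<longlongrightarrow> u $ i / v0 $ i) F"
    using \<open>v0 $ i \<noteq> 0\<close> by (intro tendsto_intros lim v)
  moreover have "\<forall>\<^sub>F t in F. (c t *s v t) $ i / v t $ i = c t"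
    using tendsto_imp_eventually_ne[OF tendsto_vec_nth[OF v(1)] \<open>v0 $ i \<noteq> 0\<close>]
    by eventually_elim simp
  ultimately have c: "(c \<longlongrightarrow> u $ i / v0 $ i) F"
    by (rule Lim_transform_eventually)
  moreover have "u = (u $ i / v0 $ i) *s v0"
    using tendsto_unique[OF \<open>F \<noteq> bot\<close> lim tendsto_vector_smult[OF c v(1)]] .
  ultimately show thesis by (rule that)
qed

lemma tendsto_pT_factorization:
  fixes S :: "nat \<Rightarrow> 'a::real_normed_field^'k^'r^'r"
  assumes "S \<longlonglongrightarrow> T" and "C \<longlonglongrightarrow> C0"
    and "\<And>t. pT (S t) \<gamma> = pT (S t) \<gamma>0 * (\<Prod>\<sigma>\<in>UNIV. linform (C t $ \<sigma>) \<gamma>)"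
  shows "pT T \<gamma> = pT T \<gamma>0 * (\<Prod>\<sigma>\<in>UNIV. linform (C0 $ \<sigma>) \<gamma>)"
proof -
  have "(\<lambda>t. pT (S t) \<gamma>0 * (\<Prod>\<sigma>\<in>UNIV. linform (C t $ \<sigma>) \<gamma>))
      \<longlonglongrightarrow> pT T \<gamma>0 * (\<Prod>\<sigma>\<in>UNIV. linform (C0 $ \<sigma>) \<gamma>)"
    by (intro tendsto_intros assms(1,2))
  moreover have "(\<lambda>t. pT (S t) \<gamma>) \<longlonglongrightarrow> pT T \<gamma>"
    by (intro tendsto_intros assms(1))
  ultimately show ?thesis
    unfolding assms(3) by (rule LIMSEQ_unique[rotated])
qed

lemma jge_factorizationD:
  assumes "jge_factorization T \<gamma>0 C W"
  shows "pT T \<gamma> = pT T \<gamma>0 * (\<Prod>\<sigma>\<in>UNIV. linform (C $ \<sigma>) \<gamma>)"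
    and "norm (W $ \<sigma>) = 1"
    and "slice T l *v W $ \<sigma> = C $ \<sigma> $ l *s (slice_mix T \<gamma>0 *v W $ \<sigma>)"
  using assms unfolding jge_factorization_def by blast+

lemma tendsto_jge_coefficient:
  fixes S :: "nat \<Rightarrow> 'a::real_normed_field^'k^'r^'r"
  assumes S: "S \<longlonglongrightarrow> T" and w: "w \<longlonglongrightarrow> w0" "w0 \<noteq> 0" and det_T: "det (slice_mix T \<gamma>0) \<noteq> 0"
    and eig: "\<And>t. slice (S t) l *v w t = c t *s (slice_mix (S t) \<gamma>0 *v w t)"
  shows "\<exists>c0. c \<longlonglongrightarrow> c0 \<and> slice T l *v w0 = c0 *s (slice_mix T \<gamma>0 *v w0)"
proof -
  have "(\<lambda>t. slice (S t) l *v w t) \<longlonglongrightarrow> slice T l *v w0"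
    by (intro tendsto_intros S w)
  then have lim: "(\<lambda>t. c t *s (slice_mix (S t) \<gamma>0 *v w t)) \<longlonglongrightarrow> slice T l *v w0"
    by (simp only: eig)
  have "(\<lambda>t. slice_mix (S t) \<gamma>0 *v w t) \<longlonglongrightarrow> slice_mix T \<gamma>0 *v w0"
    by (intro tendsto_intros S w)
  from tendsto_coefficient_of_smult[OF lim this matrix_vector_mult_nonzero[OF det_T w(2)]
      trivial_limit_sequentially]
  show ?thesis by blast
qed

lemma jge_factorization_limit:
  fixes S :: "nat \<Rightarrow> 'a::real_normed_field^'k^'r^'r"
  assumes S: "S \<longlonglongrightarrow> T" and det_T: "det (slice_mix T \<gamma>0) \<noteq> 0"
    and fac: "\<And>t. jge_factorization (S t) \<gamma>0 (C t) (W t)"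
  obtains C0 W0 where "jge_factorization T \<gamma>0 C0 W0"
proof -
  have "norm (W t) \<le> real CARD('r)" for t
    using norm_vec_le_sum_norm[of "W t"] jge_factorizationD(2)[OF fac] by simp
  then have "bounded (range W)" unfolding bounded_iff by blast
  then obtain r W0 where "strict_mono r" and W_r: "(\<lambda>t. W (r t)) \<longlonglongrightarrow> W0"
    using real_normed_field_matrix_convergent_subsequence unfolding o_def by blast
  have S_r: "(\<lambda>t. S (r t)) \<longlonglongrightarrow> T"
    using LIMSEQ_subseq_LIMSEQ[OF S \<open>strict_mono r\<close>] unfolding o_def .
  have "norm (W0 $ \<sigma>) = 1" for \<sigma>
  proof -
    have "(\<lambda>t. norm (W (r t) $ \<sigma>)) \<longlonglongrightarrow> norm (W0 $ \<sigma>)"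
      by (intro tendsto_intros W_r)
    moreover have "(\<lambda>t. norm (W (r t) $ \<sigma>)) = (\<lambda>t. 1)"
      using jge_factorizationD(2)[OF fac] by simp
    ultimately show ?thesis
      using LIMSEQ_unique[OF _ tendsto_const] by simp
  qed
  define c where "c \<sigma> l = lim (\<lambda>t. C (r t) $ \<sigma> $ l)" for \<sigma> l
  have c: "(\<lambda>t. C (r t) $ \<sigma> $ l) \<longlonglongrightarrow> c \<sigma> l \<and> slice T l *v W0 $ \<sigma> = c \<sigma> l *s (slice_mix T \<gamma>0 *v W0 $ \<sigma>)"
    for \<sigma> l
  proof -
    have "W0 $ \<sigma> \<noteq> 0" using \<open>norm (W0 $ \<sigma>) = 1\<close> by auto
    from tendsto_jge_coefficient[OF S_r tendsto_vec_nth[OF W_r] this det_T jge_factorizationD(3)[OF fac]]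
    show ?thesis unfolding c_def using limI by metis
  qed
  define C0 where "C0 = (\<chi> \<sigma> l. c \<sigma> l)"
  have "(\<lambda>t. \<chi> \<sigma> l. C (r t) $ \<sigma> $ l) \<longlonglongrightarrow> C0"
    unfolding C0_def using c by (intro tendsto_vec_lambda) blast
  then have C_r: "(\<lambda>t. C (r t)) \<longlonglongrightarrow> C0" by simp
  have "pT T \<gamma> = pT T \<gamma>0 * (\<Prod>\<sigma>\<in>UNIV. linform (C0 $ \<sigma>) \<gamma>)" for \<gamma>
    using S_r C_r jge_factorizationD(1)[OF fac] by (rule tendsto_pT_factorization)
  moreover have "slice T l *v W0 $ \<sigma> = C0 $ \<sigma> $ l *s (slice_mix T \<gamma>0 *v W0 $ \<sigma>)" for \<sigma> l
    using c unfolding C0_def by simp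
  ultimately have "jge_factorization T \<gamma>0 C0 W0"
    using \<open>\<And>\<sigma>. norm (W0 $ \<sigma>) = 1\<close> unfolding jge_factorization_def by blast
  then show thesis by (rule that)
qed

lemma jge_pair_smult:
  assumes "jge_pair T lam x" and "p \<noteq> 0"
  shows "jge_pair T (p *s lam) x"
proof -
  obtain y where "x \<noteq> 0" "y \<noteq> 0" and y: "\<And>l. slice T l *v x = lam $ l *s y"
    using assms(1) unfolding jge_pair_def by blast
  have "slice T l *v x = (p *s lam) $ l *s (inverse p *s y)" for l
    using y \<open>p \<noteq> 0\<close> by simp
  moreover have "inverse p *s y \<noteq> 0"
    using \<open>y \<noteq> 0\<close> \<open>p \<noteq> 0\<close> by (simp add: vec_eq_iff)
  ultimately show ?thesis
    using \<open>x \<noteq> 0\<close> unfolding jge_pair_def by blast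
qed

lemma jge_pair_jge_factorization:
  assumes "det (slice_mix T \<gamma>0) \<noteq> 0" and "jge_factorization T \<gamma>0 C W"
  shows "jge_pair T (C $ \<sigma>) (W $ \<sigma>)"
proof -
  have "W $ \<sigma> \<noteq> 0"
    using jge_factorizationD(2)[OF assms(2), of \<sigma>] by auto
  then show ?thesis
    using matrix_vector_mult_nonzero[OF assms(1)] jge_factorizationD(3)[OF assms(2)]
    unfolding jge_pair_def by blast
qed

lemma border_rank_approximation:
  fixes T :: "'a::real_normed_field^'k^'r^'r"
  obtains S :: "nat \<Rightarrow> 'a^'k^'r^'r" where "\<And>t. tensor_rank (S t) \<le> border_rank T" "S \<longlonglongrightarrow> T"
proof -
  have "\<exists>S::nat \<Rightarrow> 'a^'k^'r^'r. (\<forall>t. tensor_rank (S t) \<le> border_rank T) \<and> S \<longlonglongrightarrow> T"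
    unfolding border_rank_def
    by (rule LeastI[of _ "tensor_rank T"]) (intro exI[of _ "\<lambda>_. T"], simp)
  then show thesis using that by blast
qed

lemma jge_factorization_border_rank:
  fixes T :: "'a::real_normed_field^'k^'r^'r"
  assumes det_T: "det (slice_mix T \<gamma>0) \<noteq> 0" and "border_rank T \<le> CARD('r)"
  obtains C W where "jge_factorization T \<gamma>0 C W"
proof -
  obtain S where rank: "\<And>t. tensor_rank (S t) \<le> border_rank T" and S: "S \<longlonglongrightarrow> T"
    using border_rank_approximation[of T] by metis
  have "\<forall>\<^sub>F t in sequentially. det (slice_mix (S t) \<gamma>0) \<noteq> 0"
    using tendsto_imp_eventually_ne[OF tendsto_det[OF tendsto_slice_mix[OF S]] det_T] .
  then obtain N where N: "\<And>t. N \<le> t \<Longrightarrow> det (slice_mix (S t) \<gamma>0) \<noteq> 0"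
    unfolding eventually_sequentially by blast
  have "\<exists>C W. jge_factorization (S (t + N)) \<gamma>0 C W" for t
  proof -
    have "tensor_rank (S (t + N)) \<le> CARD('r)"
      using rank[of "t + N"] assms(2) by simp
    then obtain a b c where abc: "S (t + N) = (\<Sum>\<sigma>\<in>(UNIV::'r set). rank1 (a \<sigma>) (b \<sigma>) (c \<sigma>))"
      by (rule tensor_rank_le_card_decomposition)
    then obtain C W where "jge_factorization (S (t + N)) \<gamma>0 C W"
      using N[of "t + N"] by (rule jge_factorization_rank1_sum) auto
    then show ?thesis by blast
  qed
  then obtain C W where "\<And>t. jge_factorization (S (t + N)) \<gamma>0 (C t) (W t)"
    by metis
  with LIMSEQ_ignore_initial_segment[OF S] det_T show thesis
    by (rule jge_factorization_limit) (rule that)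
qed

lemma jge_factorization_linear_factors:
  fixes T :: "'a::real_normed_field^'k^'r^'r"
  assumes det_T: "det (slice_mix T \<gamma>0) \<noteq> 0" and fac: "jge_factorization T \<gamma>0 C W"
  obtains L :: "nat \<Rightarrow> 'a^'k"
  where "\<And>\<gamma>. pT T \<gamma> = (\<Prod>s<CARD('r). linform (L s) \<gamma>)" "\<And>s. s < CARD('r) \<Longrightarrow> jge_value T (L s)"
proof -
  obtain h :: "nat \<Rightarrow> 'r" where h: "bij_betw h {..<CARD('r)} UNIV"
    using ex_bij_betw_lessThan_CARD by blast
  define p0 where "p0 = pT T \<gamma>0"
  have "p0 \<noteq> 0" unfolding p0_def pT_def using det_T .
  define L where "L s = (if s = 0 then p0 *s C $ h s else C $ h s)" for s
  have "(\<Prod>s<CARD('r). linform (L s) \<gamma>) = (\<Prod>s<CARD('r). (if s = 0 then p0 else 1) * linform (C $ h s) \<gamma>)" for \<gamma>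
    unfolding L_def by (intro prod.cong) (simp_all add: linform_smult_left)
  also have "\<dots> \<gamma> = p0 * (\<Prod>\<sigma>\<in>UNIV. linform (C $ \<sigma>) \<gamma>)" for \<gamma>
    using prod.reindex_bij_betw[OF h, of "\<lambda>\<sigma>. linform (C $ \<sigma>) \<gamma>"]
    by (simp add: prod.distrib)
  finally have "pT T \<gamma> = (\<Prod>s<CARD('r). linform (L s) \<gamma>)" for \<gamma>
    unfolding p0_def using jge_factorizationD(1)[OF fac, of \<gamma>] by simp
  moreover have "jge_value T (L s)" for s
  proof -
    have "jge_pair T (C $ h s) (W $ h s)"
      by (rule jge_pair_jge_factorization[OF det_T fac])
    then show ?thesis
      unfolding L_def jge_value_def using jge_pair_smult[OF _ \<open>p0 \<noteq> 0\<close>] by (cases "s = 0") auto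
  qed
  ultimately show thesis by (rule that)
qed

theorem proposition3p3:
  fixes T :: "'a::real_normed_field^'k^'r^'r"
  assumes smi: "slice_mix_invertible T"
  shows "(\<forall>lam::'a^'k. lam \<noteq> 0 \<longrightarrow> am T lam \<ge> gm T lam)
    \<and> (\<forall>lam x. jge_pair T lam x \<longrightarrow>
          (\<exists>m::nat. m > 0 \<and> (\<exists>g. kpoly g \<and> g \<noteq> (\<lambda>_. 0) \<and>
              (\<forall>\<gamma>. pT T \<gamma> = linform lam \<gamma> ^ m * g \<gamma>))))
    \<and> (border_rank T = CARD('r) \<longrightarrow>
          (\<exists>L :: nat \<Rightarrow> 'a^'k.
             (\<forall>\<gamma>. pT T \<gamma> = (\<Prod>s<CARD('r). linform (L s) \<gamma>))
           \<and> (\<forall>s<CARD('r). jge_value T (L s))))"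
proof (intro conjI allI impI)
  show "gm T lam \<le> am T lam" if "lam \<noteq> 0" for lam
    using gm_le_am[OF smi that] .
next
  fix lam x assume "jge_pair T lam x"
  then obtain g where "kpoly g" "g \<noteq> (\<lambda>_. 0)" "\<And>\<gamma>. pT T \<gamma> = linform lam \<gamma> * g \<gamma>"
    using jge_pair_linform_factor[OF smi] by blast
  then show "\<exists>m::nat. m > 0 \<and> (\<exists>g. kpoly g \<and> g \<noteq> (\<lambda>_. 0) \<and> (\<forall>\<gamma>. pT T \<gamma> = linform lam \<gamma> ^ m * g \<gamma>))"
    by (intro exI[of _ 1]) auto
next
  assume "border_rank T = CARD('r)"
  obtain \<gamma>0 where det_T: "det (slice_mix T \<gamma>0) \<noteq> 0"
    using smi unfolding slice_mix_invertible_def invertible_det_nz by blast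
  moreover obtain C W where "jge_factorization T \<gamma>0 C W"
    using jge_factorization_border_rank[OF det_T] \<open>border_rank T = CARD('r)\<close> by auto
  ultimately show "\<exists>L :: nat \<Rightarrow> 'a^'k. (\<forall>\<gamma>. pT T \<gamma> = (\<Prod>s<CARD('r). linform (L s) \<gamma>))
      \<and> (\<forall>s<CARD('r). jge_value T (L s))"
    using jge_factorization_linear_factors by metis
qed

end
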